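(* Let $0<\alpha<\beta<\tfrac12$. For all $g\in C_b^1(M)$, the upper box-counting dimension of the attractor satisfies $\overline D_B(A_g)\le D_L$.
   Context: $M=[0,1)\times\mathbb R$. $B_\alpha(x,y)=(2x,\alpha y)$ if $0\le x<\tfrac12$ and $(2x-1,\alpha y+1-\alpha)$ if $\tfrac12\le x<1$; likewise $B_\beta$. $C_b^1(M)$: $C^1$ functions on the interior of $M$ with bounded function and derivative, extended continuously to the closure. $B_g(x,y,z,w)=(B_\alpha(x,y),B_\beta(z,w)+(0,g(x,y)))$. $A_\alpha$ is the Cantor set with $A_\alpha=\alpha A_\alpha\cup(\alpha A_\alpha+1-\alpha)$ (similarly $A_\beta$), $A=[0,1)\times A_\alpha\times[0,1)\times A_\beta$, and the attractor of $B_g$ is $A_g=h_g(A)$ where $h_g(x,y,z,w)=\big(x,y,z,w+\sum_{i\ge0}\beta^i g(B_\alpha^{-i-1}(x,y))\big)$, $B_\alpha^{-1}(x,y)=(x/2,y/\alpha)$ if $y\le\tfrac12$, $((x+1)/2,(y-(1-\alpha))/\alpha)$ if $y>\tfrac12$. $\overline D_B(S)=\limsup_{\varepsilon\to0}\frac{\log N(S,\varepsilon)}{-\log\varepsilon}$, $N(S,\varepsilon)$ the least number of $\varepsilon$-balls covering $S$. $D_L=2-2\frac{\log2}{\log\beta}$ if $\beta\le\tfrac14$ and $D_L=3-2\frac{\log2}{\log\alpha}-\frac{\log\beta}{\log\alpha}$ if $\beta\ge\tfrac14$. *)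

theory Defs
  imports "HOL-Analysis.Analysis"
begin

definition M_strip :: "(real \<times> real) set" where
  "M_strip = {0..<1} \<times> UNIV"

definition baker :: "real \<Rightarrow> real \<times> real \<Rightarrow> real \<times> real" where
  "baker a p = (if fst p < 1/2 then (2 * fst p, a * snd p)
                else (2 * fst p - 1, a * snd p + 1 - a))"

definition baker_inv :: "real \<Rightarrow> real \<times> real \<Rightarrow> real \<times> real" where
  "baker_inv a p = (if snd p \<le> 1/2 then (fst p / 2, snd p / a)
                    else ((fst p + 1) / 2, (snd p - (1 - a)) / a))"

definition skew_baker :: "real \<Rightarrow> real \<Rightarrow> (real \<times> real \<Rightarrow> real)
    \<Rightarrow> real \<times> real \<times> real \<times> real \<Rightarrow> real \<times> real \<times> real \<times> real" where
  "skew_baker a b g q = (case q of (x, y, z, w) \<Rightarrow>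
     (let (x', y') = baker a (x, y); (z', w') = baker b (z, w)
      in (x', y', z', w' + g (x, y))))"

definition Cb1 :: "(real \<times> real \<Rightarrow> real) set" where
  "Cb1 = {g. (\<exists>g' :: (real \<times> real) \<Rightarrow> ((real \<times> real) \<Rightarrow>\<^sub>L real).
               (\<forall>p \<in> {0<..<1} \<times> UNIV. (g has_derivative blinfun_apply (g' p)) (at p))
             \<and> continuous_on ({0<..<1} \<times> UNIV) g'
             \<and> bounded (g' ` ({0<..<1} \<times> UNIV)))
           \<and> bounded (g ` M_strip)
           \<and> (\<exists>G. continuous_on ({0..1} \<times> UNIV) G \<and> (\<forall>p \<in> M_strip. G p = g p))}"

text \<open>The Cantor set A_a = a A_a \<union> (a A_a + 1 - a) (the attractor of this IFS),
  given explicitly as the set of its points.\<close>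
definition cantor :: "real \<Rightarrow> real set" where
  "cantor a = {(1 - a) * (\<Sum>i. a ^ i * (if d i then 1 else 0)) | d :: nat \<Rightarrow> bool. True}"

definition base_set :: "real \<Rightarrow> real \<Rightarrow> (real \<times> real \<times> real \<times> real) set" where
  "base_set a b = {0..<1} \<times> cantor a \<times> {0..<1} \<times> cantor b"

definition conj_h :: "real \<Rightarrow> real \<Rightarrow> (real \<times> real \<Rightarrow> real)
    \<Rightarrow> real \<times> real \<times> real \<times> real \<Rightarrow> real \<times> real \<times> real \<times> real" where
  "conj_h a b g q = (case q of (x, y, z, w) \<Rightarrow>
     (x, y, z, w + (\<Sum>i. b ^ i * g ((baker_inv a ^^ (i + 1)) (x, y)))))"

definition attractor :: "real \<Rightarrow> real \<Rightarrow> (real \<times> real \<Rightarrow> real)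
    \<Rightarrow> (real \<times> real \<times> real \<times> real) set" where
  "attractor a b g = conj_h a b g ` base_set a b"

definition cover_num :: "'a::metric_space set \<Rightarrow> real \<Rightarrow> nat" where
  "cover_num S e = Inf {card F | F. finite F \<and> S \<subseteq> (\<Union>c \<in> F. ball c e)}"

definition upper_box_dim :: "'a::metric_space set \<Rightarrow> ereal" where
  "upper_box_dim S = Limsup (at_right 0) (\<lambda>e. ereal (ln (real (cover_num S e)) / - ln e))"

definition D_L :: "real \<Rightarrow> real \<Rightarrow> real" where
  "D_L a b = (if b \<le> 1/4 then 2 - 2 * ln 2 / ln b
              else 3 - 2 * ln 2 / ln a - ln b / ln a)"

end

theory Submission
  imports Defs "HOL-Real_Asymp.Real_Asymp"
begin

text \<open>
  A point of the attractor is (x, y, z, w + \<phi>(x, y)) with y in A_\<alpha>, w in A_\<beta> and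
  \<phi>(x, y) = \<Sum>_i \<beta>^i g(B_\<alpha>^(-i-1)(x, y)). Fix a scale \<alpha>^n \<le> \<delta> \<le> \<beta>^n. The first n Cantor
  digits locate y and w up to \<alpha>^n and \<beta>^n, and a \<delta>-grid locates x and z. Inside such a
  cell the first n inverse-baker preimages of two base points stay close, so, g being bounded
  and Lipschitz, \<phi> varies by O(n \<beta>^n). This covers the attractor by O(n 4^n \<beta>^n / \<delta>^3)
  balls of radius 4\<delta>. Taking \<delta> = \<rho>^n with \<alpha> \<le> \<rho> \<le> \<beta> bounds the upper box dimension by
  ln (4\<beta> / \<rho>^3) / -ln \<rho> = 3 + ln (4\<beta>) / -ln \<rho>, which is smallest for \<rho> = \<beta> when 4\<beta> \<le> 1
  and for \<rho> = \<alpha> otherwise; that value is D_L.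
\<close>

section \<open>Upper box dimension from geometric covers\<close>

lemma cover_num_le_card:
  fixes S :: "'a::metric_space set"
  assumes "finite F" "S \<subseteq> (\<Union>c\<in>F. ball c r)" "r \<le> e"
  shows "cover_num S e \<le> card F"
proof -
  have "S \<subseteq> (\<Union>c\<in>F. ball c e)" using assms(2) subset_ball[OF assms(3)] by blast
  then have "card F \<in> {card F | F. finite F \<and> S \<subseteq> (\<Union>c \<in> F. ball c e)}" using assms(1) by blast
  then show ?thesis unfolding cover_num_def by (rule cInf_lower) (rule bdd_belowI[of _ 0], rule le0)
qed

lemma geometric_scale_index:
  fixes \<rho> C e :: real
  assumes "0 < \<rho>" "\<rho> < 1" "0 < e" "e < C"
  defines "n \<equiv> nat \<lceil>ln (e / C) / ln \<rho>\<rceil>"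
  shows "C * \<rho> ^ n \<le> e" and "- ln C + (real n - 1) * - ln \<rho> < - ln e"
proof -
  define t where "t = ln (e / C) / ln \<rho>"
  have ln\<rho>: "ln \<rho> < 0" using assms by simp
  have "ln (e / C) < 0" using assms by simp
  then have "t > 0" unfolding t_def using ln\<rho> by (simp add: divide_neg_neg)
  then have nt: "t \<le> real n" "real n < t + 1" unfolding n_def t_def[symmetric] by linarith+
  have lnt: "t * ln \<rho> = ln e - ln C" unfolding t_def using ln\<rho> assms by (simp add: ln_div)
  have "ln (\<rho> ^ n) \<le> ln (e / C)"
    using mult_right_mono_neg[OF nt(1) less_imp_le[OF ln\<rho>]] lnt assms by (simp add: ln_realpow ln_div)
  then have "\<rho> ^ n \<le> e / C" using assms by simp
  then show "C * \<rho> ^ n \<le> e" using assms by (simp add: field_simps)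
  have "t * ln \<rho> < (real n - 1) * ln \<rho>" using nt ln\<rho> by (intro mult_strict_right_mono_neg) auto
  then show "- ln C + (real n - 1) * - ln \<rho> < - ln e" using lnt by simp
qed

lemma filterlim_geometric_scale_index:
  fixes \<rho> C :: real
  assumes \<rho>: "0 < \<rho>" "\<rho> < 1" and "0 < C"
  shows "filterlim (\<lambda>e. nat \<lceil>ln (e / C) / ln \<rho>\<rceil>) at_top (at_right 0)"
  unfolding filterlim_at_top
proof
  fix N
  have "\<forall>\<^sub>F e in at_right 0. 0 < e \<and> e < min C (C * \<rho> ^ N)"
    unfolding eventually_at_right_field using assms by (intro exI[of _ "min C (C * \<rho> ^ N)"]) auto
  then show "\<forall>\<^sub>F e in at_right 0. N \<le> nat \<lceil>ln (e / C) / ln \<rho>\<rceil>"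
  proof eventually_elim
    case (elim e)
    define k where "k = nat \<lceil>ln (e / C) / ln \<rho>\<rceil>"
    have "C * \<rho> ^ k < C * \<rho> ^ N"
      using geometric_scale_index(1)[OF \<rho>, of e C] elim unfolding k_def by linarith
    then have "\<rho> ^ k < \<rho> ^ N" using \<open>0 < C\<close> by simp
    then show ?case using power_strict_decreasing_iff[OF \<rho>] unfolding k_def[symmetric] by simp
  qed
qed

lemma ln_cover_num_le:
  fixes S :: "'a::metric_space set"
  assumes "K \<ge> 1" "c \<ge> 1" and F: "finite F" "S \<subseteq> (\<Union>x\<in>F. ball x r)" "r \<le> e"
    and card: "real (card F) \<le> K * (real n + 1) * c ^ n"
  shows "ln (real (cover_num S e)) \<le> ln K + ln (real n + 1) + real n * ln c"
proof -
  have "1 * 1 \<le> K * (real n + 1)" using assms by (intro mult_mono) auto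
  then have "1 * 1 \<le> K * (real n + 1) * c ^ n" using assms by (intro mult_mono one_le_power) auto
  moreover have "real (cover_num S e) \<le> K * (real n + 1) * c ^ n"
    using cover_num_le_card[OF F] card by linarith
  ultimately have "ln (real (cover_num S e)) \<le> ln (K * (real n + 1) * c ^ n)"
    by (cases "cover_num S e = 0") auto
  also have "\<dots> = ln K + ln (real n + 1) + real n * ln c"
    using assms by (simp add: ln_mult ln_realpow)
  finally show ?thesis .
qed

lemma upper_box_dim_le_geometric_covers:
  fixes S :: "'a::metric_space set"
  assumes \<rho>: "0 < \<rho>" "\<rho> < 1" and C: "C > 0" and "K \<ge> 1" "c \<ge> 1"
    and covers: "\<And>n. \<exists>F. finite F \<and> S \<subseteq> (\<Union>x\<in>F. ball x (C * \<rho> ^ n))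
                      \<and> real (card F) \<le> K * (real n + 1) * c ^ n"
  shows "upper_box_dim S \<le> ereal (ln c / - ln \<rho>)"
proof -
  define b where "b = - ln \<rho>"
  have b: "b > 0" using \<rho> by (simp add: b_def)
  define idx where "idx e = nat \<lceil>ln (e / C) / ln \<rho>\<rceil>" for e
  define u where "u n = (ln K + ln (real n + 1) + real n * ln c) / (- ln C + (real n - 1) * b)"
    for n :: nat
  have idx_lim: "filterlim idx at_top (at_right 0)"
    unfolding idx_def using \<rho> C by (rule filterlim_geometric_scale_index)
  have "u \<longlonglongrightarrow> ln c / b" unfolding u_def using b by (real_asymp simp: divide_simps)
  then have u_lim: "((\<lambda>e. ereal (u (idx e))) \<longlongrightarrow> ereal (ln c / b)) (at_right 0)"
    using filterlim_compose[OF _ idx_lim] by (simp add: tendsto_ereal)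
  have "\<forall>\<^sub>F n in at_top. 0 < - ln C + (real n - 1) * b" using b by real_asymp
  then have "\<forall>\<^sub>F e in at_right 0. 0 < - ln C + (real (idx e) - 1) * b"
    using idx_lim by (rule eventually_compose_filterlim)
  moreover have "\<forall>\<^sub>F e in at_right 0. 0 < e \<and> e < C"
    unfolding eventually_at_right_field using C by (intro exI[of _ C]) auto
  ultimately have "\<forall>\<^sub>F e in at_right 0.
      ereal (ln (real (cover_num S e)) / - ln e) \<le> ereal (u (idx e))"
  proof eventually_elim
    case (elim e)
    define n where "n = idx e"
    have D: "0 < - ln C + (real n - 1) * b" using elim by (simp add: n_def)
    have rad: "C * \<rho> ^ n \<le> e" and den: "- ln C + (real n - 1) * b < - ln e"
      using geometric_scale_index[OF \<rho>, of e C] elim unfolding n_def idx_def b_def by auto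
    obtain F where "finite F" "S \<subseteq> (\<Union>x\<in>F. ball x (C * \<rho> ^ n))"
      "real (card F) \<le> K * (real n + 1) * c ^ n"
      using covers by blast
    then have num: "ln (real (cover_num S e)) \<le> ln K + ln (real n + 1) + real n * ln c"
      using rad assms by (intro ln_cover_num_le) auto
    have "0 \<le> ln (real (cover_num S e))" by (cases "cover_num S e = 0") auto
    then have "ln (real (cover_num S e)) / - ln e \<le> ln (real (cover_num S e)) / (- ln C + (real n - 1) * b)"
      using D den by (intro divide_left_mono mult_pos_pos) auto
    also have "\<dots> \<le> u n" unfolding u_def using num D by (intro divide_right_mono) auto
    finally show ?case by (simp add: n_def)
  qed
  then have "upper_box_dim S \<le> Limsup (at_right 0) (\<lambda>e. ereal (u (idx e)))"
    unfolding upper_box_dim_def by (rule Limsup_mono)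
  also have "\<dots> = ereal (ln c / b)" by (rule lim_imp_Limsup[OF _ u_lim]) simp
  finally show ?thesis unfolding b_def .
qed

section \<open>Cantor digits and the inverse baker map\<close>

lemma abs_suminf_le_geometric:
  fixes f :: "nat \<Rightarrow> real"
  assumes r: "0 \<le> r" "r < 1" and f: "\<And>i. \<bar>f i\<bar> \<le> M * r ^ i"
  shows "summable f" and "\<bar>suminf f\<bar> \<le> M / (1 - r)"
proof -
  have g: "summable (\<lambda>i. M * r ^ i)" using r by (intro summable_mult summable_geometric) simp
  have af: "summable (\<lambda>i. \<bar>f i\<bar>)" using f by (intro summable_comparison_test[OF _ g]) auto
  then show "summable f" by (rule summable_rabs_cancel)
  have "\<bar>suminf f\<bar> \<le> (\<Sum>i. \<bar>f i\<bar>)" using af by (rule summable_rabs)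
  also have "\<dots> \<le> (\<Sum>i. M * r ^ i)" using f by (intro suminf_le af g) auto
  also have "\<dots> = M / (1 - r)" using r by (simp add: suminf_mult suminf_geometric)
  finally show "\<bar>suminf f\<bar> \<le> M / (1 - r)" .
qed

lemma abs_suminf_le_head_tail:
  fixes f :: "nat \<Rightarrow> real"
  assumes "summable f" and head: "\<And>i. i < n \<Longrightarrow> \<bar>f i\<bar> \<le> A"
    and r: "0 \<le> r" "r < 1" and tail: "\<And>i. \<bar>f (i + n)\<bar> \<le> M * r ^ i"
  shows "\<bar>suminf f\<bar> \<le> real n * A + M / (1 - r)"
proof -
  have "\<bar>\<Sum>i<n. f i\<bar> \<le> (\<Sum>i<n. A)" using head by (intro order_trans[OF sum_abs sum_mono]) auto
  moreover have "\<bar>\<Sum>i. f (i + n)\<bar> \<le> M / (1 - r)" using r tail by (rule abs_suminf_le_geometric)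
  moreover have "suminf f = (\<Sum>i. f (i + n)) + (\<Sum>i<n. f i)"
    using \<open>summable f\<close> by (rule suminf_split_initial_segment)
  ultimately show ?thesis by simp
qed

definition cantor_point :: "real \<Rightarrow> (nat \<Rightarrow> bool) \<Rightarrow> real" where
  "cantor_point a d = (1 - a) * (\<Sum>i. a ^ i * of_bool (d i))"

lemma cantor_eq_range: "cantor a = range (cantor_point a)"
  by (auto simp: cantor_def cantor_point_def of_bool_def)

lemma summable_cantor_digits: "0 \<le> (a::real) \<Longrightarrow> a < 1 \<Longrightarrow> summable (\<lambda>i. a ^ i * of_bool (d i))"
  by (rule abs_suminf_le_geometric(1)[of a _ 1]) auto

lemma cantor_point_bounds:
  assumes "0 \<le> a" "a < 1"
  shows "0 \<le> cantor_point a d" "cantor_point a d \<le> 1"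
proof -
  have "\<bar>\<Sum>i. a ^ i * of_bool (d i)\<bar> \<le> 1 / (1 - a)"
    using assms by (intro abs_suminf_le_geometric(2)) auto
  then have "(1 - a) * (\<Sum>i. a ^ i * of_bool (d i)) \<le> (1 - a) * (1 / (1 - a))"
    using assms by (intro mult_left_mono) auto
  moreover have "0 \<le> (\<Sum>i. a ^ i * of_bool (d i))"
    using assms by (intro suminf_nonneg summable_cantor_digits) auto
  ultimately show "0 \<le> cantor_point a d" "cantor_point a d \<le> 1"
    using assms by (auto simp: cantor_point_def)
qed

lemma cantor_point_Suc:
  assumes "0 \<le> a" "a < 1"
  shows "cantor_point a d = (1 - a) * of_bool (d 0) + a * cantor_point a (\<lambda>i. d (Suc i))"
proof -
  have "(\<Sum>i. a ^ i * of_bool (d i)) = (\<Sum>i. a ^ Suc i * of_bool (d (Suc i))) + of_bool (d 0)"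
    using suminf_split_head[OF summable_cantor_digits[OF assms]] by simp
  also have "(\<Sum>i. a ^ Suc i * of_bool (d (Suc i))) = a * (\<Sum>i. a ^ i * of_bool (d (Suc i)))"
    using suminf_mult[OF summable_cantor_digits[OF assms], of a] by (simp add: mult.assoc)
  finally show ?thesis unfolding cantor_point_def by (simp add: algebra_simps)
qed

lemma abs_cantor_point_diff:
  assumes a: "0 \<le> a" "a < 1" and agree: "\<And>i. i < m \<Longrightarrow> d i = d' i"
  shows "\<bar>cantor_point a d - cantor_point a d'\<bar> \<le> a ^ m"
proof -
  define f where "f i = a ^ i * of_bool (d i) - a ^ i * of_bool (d' i)" for i
  have "\<bar>f i\<bar> \<le> 1 * a ^ i" for i using a by (auto simp: f_def)
  then have "summable f" using a by (rule abs_suminf_le_geometric(1)[rotated 2])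
  moreover have "\<bar>f (i + m)\<bar> \<le> a ^ m * a ^ i" for i
    using a by (auto simp: f_def power_add mult_ac)
  ultimately have "\<bar>suminf f\<bar> \<le> real m * 0 + a ^ m / (1 - a)"
    using a agree by (intro abs_suminf_le_head_tail) (auto simp: f_def)
  then have "(1 - a) * \<bar>suminf f\<bar> \<le> a ^ m" using a by (simp add: field_simps)
  moreover have "cantor_point a d - cantor_point a d' = (1 - a) * suminf f"
    unfolding cantor_point_def f_def
    using suminf_diff[OF summable_cantor_digits[OF a] summable_cantor_digits[OF a]]
    by (simp add: right_diff_distrib[symmetric])
  ultimately show ?thesis using a by (simp add: abs_mult)
qed

fun binary_shift :: "real \<Rightarrow> (nat \<Rightarrow> bool) \<Rightarrow> nat \<Rightarrow> real" where
  "binary_shift x d 0 = x"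
| "binary_shift x d (Suc k) = (binary_shift x d k + of_bool (d k)) / 2"

lemma binary_shift_bounds: "0 \<le> x \<Longrightarrow> x < 1 \<Longrightarrow> 0 \<le> binary_shift x d k \<and> binary_shift x d k < 1"
  by (induction k) auto

lemma binary_shift_diff:
  "(\<And>i. i < k \<Longrightarrow> d i = d' i) \<Longrightarrow> binary_shift x d k - binary_shift x' d' k = (x - x') / 2 ^ k"
  by (induction k) (auto simp: field_simps)

lemma baker_inv_cantor_point:
  assumes "0 < a" "a < 1/2"
  shows "baker_inv a (x, cantor_point a d) = ((x + of_bool (d 0)) / 2, cantor_point a (\<lambda>i. d (Suc i)))"
proof -
  let ?y = "cantor_point a (\<lambda>i. d (Suc i))"
  have y: "0 \<le> ?y" "?y \<le> 1" using assms cantor_point_bounds[of a] by auto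
  have ay: "0 \<le> a * ?y" "a * ?y \<le> a" using y assms by (simp_all add: mult_left_le)
  have split: "cantor_point a d = (1 - a) * of_bool (d 0) + a * ?y"
    using assms by (intro cantor_point_Suc) auto
  show ?thesis
  proof (cases "d 0")
    case True
    then have "\<not> cantor_point a d \<le> 1/2" using split ay assms by simp
    then show ?thesis using True split assms by (simp add: baker_inv_def field_simps)
  next
    case False
    then have "cantor_point a d = a * ?y" using split by simp
    then have "cantor_point a d \<le> 1/2" using ay assms by linarith
    then show ?thesis using False split assms by (simp add: baker_inv_def)
  qed
qed

lemma funpow_baker_inv_cantor_point:
  assumes "0 < a" "a < 1/2"
  shows "(baker_inv a ^^ k) (x, cantor_point a d) = (binary_shift x d k, cantor_point a (\<lambda>i. d (i + k)))"
  by (induction k) (simp_all add: baker_inv_cantor_point[OF assms])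

section \<open>The fibre shift of the conjugacy\<close>

definition conj_shift :: "real \<Rightarrow> real \<Rightarrow> (real \<times> real \<Rightarrow> real) \<Rightarrow> real \<times> real \<Rightarrow> real" where
  "conj_shift a b g p = (\<Sum>i. b ^ i * g ((baker_inv a ^^ (i + 1)) p))"

lemma conj_h_eq: "conj_h a b g (x, y, z, w) = (x, y, z, w + conj_shift a b g (x, y))"
  by (simp add: conj_h_def conj_shift_def)

lemma funpow_baker_inv_in_strip:
  assumes "0 < a" "a < 1/2" "0 \<le> x" "x < 1"
  shows "(baker_inv a ^^ k) (x, cantor_point a d) \<in> M_strip"
  using binary_shift_bounds[OF assms(3,4)]
  by (simp add: funpow_baker_inv_cantor_point[OF assms(1,2)] M_strip_def)

lemma norm_funpow_baker_inv_diff: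
  assumes a: "0 < a" "a < 1/2" and "k \<le> n" and agree: "\<And>i. i < n \<Longrightarrow> d i = d' i"
  shows "norm ((baker_inv a ^^ k) (x, cantor_point a d) - (baker_inv a ^^ k) (x', cantor_point a d'))
           \<le> \<bar>x - x'\<bar> + a ^ (n - k)"
proof -
  have "\<bar>binary_shift x d k - binary_shift x' d' k\<bar> = \<bar>x - x'\<bar> / 2 ^ k"
    using agree \<open>k \<le> n\<close> by (subst binary_shift_diff) auto
  also have "\<dots> \<le> \<bar>x - x'\<bar>"
    using mult_left_mono[OF one_le_power[of 2 k], of "\<bar>x - x'\<bar>"] by (simp add: divide_le_eq)
  finally have "\<bar>binary_shift x d k - binary_shift x' d' k\<bar> \<le> \<bar>x - x'\<bar>" .
  moreover have "\<bar>cantor_point a (\<lambda>i. d (i + k)) - cantor_point a (\<lambda>i. d' (i + k))\<bar> \<le> a ^ (n - k)"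
    using a agree by (intro abs_cantor_point_diff) auto
  ultimately show ?thesis
    using norm_Pair_le[of "binary_shift x d k - binary_shift x' d' k"
        "cantor_point a (\<lambda>i. d (i + k)) - cantor_point a (\<lambda>i. d' (i + k))"]
    by (simp add: funpow_baker_inv_cantor_point[OF a])
qed

lemma weighted_norm_funpow_baker_inv_diff:
  assumes a: "0 < a" "a < 1/2" "a \<le> b" "b \<le> 1" and "i < n"
    and agree: "\<And>i. i < n \<Longrightarrow> d i = d' i"
  shows "b ^ i * norm ((baker_inv a ^^ (i + 1)) (x, cantor_point a d)
                       - (baker_inv a ^^ (i + 1)) (x', cantor_point a d'))
           \<le> \<bar>x - x'\<bar> + b ^ (n - 1)"
proof -
  have "b ^ i * norm ((baker_inv a ^^ (i + 1)) (x, cantor_point a d)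
                      - (baker_inv a ^^ (i + 1)) (x', cantor_point a d'))
        \<le> b ^ i * (\<bar>x - x'\<bar> + a ^ (n - (i + 1)))"
    using a \<open>i < n\<close> agree by (intro mult_left_mono norm_funpow_baker_inv_diff) auto
  also have "\<dots> = b ^ i * \<bar>x - x'\<bar> + b ^ i * a ^ (n - (i + 1))" by (simp add: algebra_simps)
  also have "\<dots> \<le> \<bar>x - x'\<bar> + b ^ i * b ^ (n - (i + 1))"
    using a by (intro add_mono mult_left_mono power_mono) (auto simp: mult_left_le_one_le power_le_one)
  also have "b ^ i * b ^ (n - (i + 1)) = b ^ (n - 1)" using \<open>i < n\<close> by (simp flip: power_add)
  finally show ?thesis .
qed

lemma abs_conj_shift_diff:
  assumes a: "0 < a" "a < 1/2" "a \<le> b" "b < 1"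
    and bounded: "\<And>p. p \<in> M_strip \<Longrightarrow> \<bar>g p\<bar> \<le> G"
    and lipschitz: "\<And>p q. p \<in> M_strip \<Longrightarrow> q \<in> M_strip \<Longrightarrow> \<bar>g p - g q\<bar> \<le> L * norm (p - q)"
    and "L \<ge> 0" and x: "0 \<le> x" "x < 1" "0 \<le> x'" "x' < 1"
    and agree: "\<And>i. i < n \<Longrightarrow> d i = d' i"
  shows "\<bar>conj_shift a b g (x, cantor_point a d) - conj_shift a b g (x', cantor_point a d')\<bar>
           \<le> real n * (L * (\<bar>x - x'\<bar> + b ^ (n - 1))) + 2 * G * b ^ n / (1 - b)"
proof -
  define P where "P i = (baker_inv a ^^ (i + 1)) (x, cantor_point a d)" for i
  define P' where "P' i = (baker_inv a ^^ (i + 1)) (x', cantor_point a d')" for i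
  have PM: "P i \<in> M_strip" "P' i \<in> M_strip" for i
    unfolding P_def P'_def
    using funpow_baker_inv_in_strip[OF a(1,2) x(1,2)] funpow_baker_inv_in_strip[OF a(1,2) x(3,4)]
    by blast+
  have b: "0 \<le> b" "b < 1" using a by auto
  have summable: "summable (\<lambda>i. b ^ i * g (Q i))" if "\<And>i. Q i \<in> M_strip" for Q
    using bounded[OF that] b
    by (intro abs_suminf_le_geometric(1)[OF b, of _ G])
      (simp add: abs_mult, metis mult.commute mult_left_mono zero_le_power)
  have "conj_shift a b g (x, cantor_point a d) - conj_shift a b g (x', cantor_point a d')
        = (\<Sum>i. b ^ i * g (P i) - b ^ i * g (P' i))"
    unfolding conj_shift_def P_def[symmetric] P'_def[symmetric]
    using summable PM by (intro suminf_diff) auto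
  also have "\<bar>\<dots>\<bar> \<le> real n * (L * (\<bar>x - x'\<bar> + b ^ (n - 1))) + 2 * G * b ^ n / (1 - b)"
  proof (rule abs_suminf_le_head_tail[OF summable_diff[OF summable[OF PM(1)] summable[OF PM(2)]] _ b])
    fix i assume "i < n"
    have "b ^ i * \<bar>g (P i) - g (P' i)\<bar> \<le> b ^ i * (L * norm (P i - P' i))"
      using lipschitz[OF PM(1)[of i] PM(2)[of i]] b by (intro mult_left_mono) auto
    also have "\<dots> = L * (b ^ i * norm (P i - P' i))" by (simp add: mult.left_commute)
    also have "\<dots> \<le> L * (\<bar>x - x'\<bar> + b ^ (n - 1))"
      unfolding P_def P'_def using a \<open>i < n\<close> agree \<open>L \<ge> 0\<close>
      by (intro mult_left_mono weighted_norm_funpow_baker_inv_diff) auto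
    finally show "\<bar>b ^ i * g (P i) - b ^ i * g (P' i)\<bar> \<le> L * (\<bar>x - x'\<bar> + b ^ (n - 1))"
      using b by (simp add: abs_mult flip: right_diff_distrib)
  next
    fix i
    have "\<bar>g (P (i + n)) - g (P' (i + n))\<bar> \<le> 2 * G"
      using bounded[OF PM(1), of "i + n"] bounded[OF PM(2), of "i + n"] by linarith
    then have "b ^ (i + n) * \<bar>g (P (i + n)) - g (P' (i + n))\<bar> \<le> b ^ (i + n) * (2 * G)"
      using b by (intro mult_left_mono) auto
    then show "\<bar>b ^ (i + n) * g (P (i + n)) - b ^ (i + n) * g (P' (i + n))\<bar> \<le> 2 * G * b ^ n * b ^ i"
      using b by (simp add: abs_mult power_add mult_ac flip: right_diff_distrib)
  qed
  finally show ?thesis .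
qed

lemma Cb1_bounded:
  assumes "g \<in> Cb1"
  obtains G where "\<And>p. p \<in> M_strip \<Longrightarrow> \<bar>g p\<bar> \<le> G"
  using assms unfolding Cb1_def bounded_iff by auto

text \<open>Lipschitz on the open strip by the mean value theorem; the bound passes to
  the closed strip through the continuous extension.\<close>
lemma Cb1_lipschitz:
  assumes "g \<in> Cb1"
  obtains L where "L \<ge> 0" and "\<And>p q. p \<in> M_strip \<Longrightarrow> q \<in> M_strip \<Longrightarrow> \<bar>g p - g q\<bar> \<le> L * norm (p - q)"
proof -
  define U :: "(real \<times> real) set" where "U = {0<..<1} \<times> UNIV"
  obtain g' :: "real \<times> real \<Rightarrow> (real \<times> real) \<Rightarrow>\<^sub>L real"
    where deriv: "\<And>p. p \<in> U \<Longrightarrow> (g has_derivative blinfun_apply (g' p)) (at p)"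
      and "bounded (g' ` U)"
    using assms unfolding Cb1_def U_def by blast
  then obtain L0 where "\<And>p. p \<in> U \<Longrightarrow> norm (g' p) \<le> L0" unfolding bounded_iff by blast
  then have L: "\<And>p. p \<in> U \<Longrightarrow> onorm (blinfun_apply (g' p)) \<le> max L0 0"
    by (auto simp: norm_blinfun.rep_eq[symmetric] intro: le_max_iff_disj[THEN iffD2])
  obtain G where G: "continuous_on (closure U) G" and Gg: "\<And>p. p \<in> M_strip \<Longrightarrow> G p = g p"
    using assms unfolding Cb1_def U_def by (auto simp: closure_Times)
  have UM: "U \<subseteq> M_strip" "M_strip \<subseteq> closure U"
    unfolding U_def M_strip_def by (auto simp: closure_Times)
  have "convex U" unfolding U_def by (intro convex_Times) auto
  then have lipU: "\<bar>g p - g q\<bar> \<le> max L0 0 * norm (p - q)" if "p \<in> U" "q \<in> U" for p q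
    using differentiable_bound[OF _ has_derivative_at_withinI[OF deriv] L that] by simp
  show ?thesis
  proof (rule that[of "max L0 0"])
    fix p q assume pq: "p \<in> M_strip" "q \<in> M_strip"
    have "continuous_on (closure (U \<times> U)) (\<lambda>(p, q). \<bar>G p - G q\<bar> - max L0 0 * norm (p - q))"
      unfolding closure_Times split_def
      by (intro continuous_intros continuous_on_compose2[OF G]) auto
    moreover have "(p, q) \<in> closure (U \<times> U)" using pq UM by (auto simp: closure_Times)
    ultimately have "(\<lambda>(p, q). \<bar>G p - G q\<bar> - max L0 0 * norm (p - q)) (p, q) \<le> 0"
    proof (rule continuous_le_on_closure)
      fix r assume "r \<in> U \<times> U"
      then obtain p' q' where "r = (p', q')" and U: "p' \<in> U" "q' \<in> U" by blast
      then show "(\<lambda>(p, q). \<bar>G p - G q\<bar> - max L0 0 * norm (p - q)) r \<le> 0"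
        using lipU[OF U] Gg[OF subsetD[OF UM(1) U(1)]] Gg[OF subsetD[OF UM(1) U(2)]] by simp
    qed
    then show "\<bar>g p - g q\<bar> \<le> max L0 0 * norm (p - q)" using Gg pq by simp
  qed simp
qed

section \<open>Covering the attractor\<close>

lemma floor_grid:
  fixes v lo hi \<delta> :: real
  assumes "0 < \<delta>" "lo \<le> v" "v \<le> hi"
  shows "\<lfloor>v / \<delta>\<rfloor> \<in> {\<lfloor>lo / \<delta>\<rfloor>..\<lfloor>hi / \<delta>\<rfloor>}"
    and "of_int \<lfloor>v / \<delta>\<rfloor> * \<delta> \<le> v" and "\<bar>v - of_int \<lfloor>v / \<delta>\<rfloor> * \<delta>\<bar> < \<delta>"
proof -
  show "\<lfloor>v / \<delta>\<rfloor> \<in> {\<lfloor>lo / \<delta>\<rfloor>..\<lfloor>hi / \<delta>\<rfloor>}"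
    using assms by (auto intro!: floor_mono divide_right_mono)
  have "of_int \<lfloor>v / \<delta>\<rfloor> \<le> v / \<delta>" "v / \<delta> < of_int \<lfloor>v / \<delta>\<rfloor> + 1" by linarith+
  then have "of_int \<lfloor>v / \<delta>\<rfloor> * \<delta> \<le> v" "v < (of_int \<lfloor>v / \<delta>\<rfloor> + 1) * \<delta>"
    using assms(1) by (simp_all only: pos_le_divide_eq pos_divide_less_eq)
  then show "of_int \<lfloor>v / \<delta>\<rfloor> * \<delta> \<le> v" and "\<bar>v - of_int \<lfloor>v / \<delta>\<rfloor> * \<delta>\<bar> < \<delta>"
    by (simp_all add: algebra_simps)
qed

lemma card_floor_interval_le:
  fixes lo hi :: real
  assumes "lo \<le> hi"
  shows "real (card {\<lfloor>lo\<rfloor>..\<lfloor>hi\<rfloor>}) \<le> hi - lo + 2"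
proof -
  have "\<lfloor>lo\<rfloor> \<le> \<lfloor>hi\<rfloor>" using assms by (rule floor_mono)
  then have "real (card {\<lfloor>lo\<rfloor>..\<lfloor>hi\<rfloor>}) = of_int \<lfloor>hi\<rfloor> - of_int \<lfloor>lo\<rfloor> + 1" by simp
  then show ?thesis by linarith
qed

lemma dist_real4_le:
  fixes a b c e a' b' c' e' :: real
  shows "dist (a, b, c, e) (a', b', c', e') \<le> \<bar>a - a'\<bar> + \<bar>b - b'\<bar> + \<bar>c - c'\<bar> + \<bar>e - e'\<bar>"
proof -
  have "norm (a - a', b - b', c - c', e - e') \<le> norm (a - a') + norm (b - b', c - c', e - e')"
    by (rule norm_Pair_le)
  also have "norm (b - b', c - c', e - e') \<le> norm (b - b') + norm (c - c', e - e')"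
    by (rule norm_Pair_le)
  also have "norm (c - c', e - e') \<le> norm (c - c') + norm (e - e')" by (rule norm_Pair_le)
  finally show ?thesis by (simp add: dist_norm)
qed

text \<open>The digit sets D, D' \<subseteq> {..<n} fix the first n Cantor digits of the y- and
  w-coordinates; k discretises what is left of the fibre coordinate.\<close>
definition attractor_centres :: "real \<Rightarrow> real \<Rightarrow> (real \<times> real \<Rightarrow> real) \<Rightarrow> nat \<Rightarrow> real \<Rightarrow> real
    \<Rightarrow> (real \<times> real \<times> real \<times> real) set" where
  "attractor_centres a b g n \<delta> E =
     (\<lambda>(i, D, j, D', k). (of_int i * \<delta>, cantor_point a (\<lambda>m. m \<in> D), of_int j * \<delta>,
        cantor_point b (\<lambda>m. m \<in> D') + conj_shift a b g (of_int i * \<delta>, cantor_point a (\<lambda>m. m \<in> D))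
        + of_int k * \<delta>))
     ` ({0..\<lfloor>1 / \<delta>\<rfloor>} \<times> Pow {..<n} \<times> {0..\<lfloor>1 / \<delta>\<rfloor>} \<times> Pow {..<n} \<times> {\<lfloor>- E / \<delta>\<rfloor>..\<lfloor>E / \<delta>\<rfloor>})"

lemma card_attractor_centres_le:
  assumes "0 < \<delta>" "\<delta> \<le> t" "t \<le> 1" "0 \<le> Q"
  shows "real (card (attractor_centres a b g n \<delta> ((real n + 1) * t * Q)))
           \<le> 18 * (Q + 1) * (real n + 1) * (4 ^ n * t / \<delta> ^ 3)"
proof -
  define E where "E = (real n + 1) * t * Q"
  define X where "X = {0..\<lfloor>1 / \<delta>\<rfloor>}"
  define W where "W = {\<lfloor>- E / \<delta>\<rfloor>..\<lfloor>E / \<delta>\<rfloor>}"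
  have "real (card X) \<le> 1 / \<delta> - 0 + 2"
    unfolding X_def using card_floor_interval_le[of 0 "1 / \<delta>"] assms by simp
  also have "\<dots> \<le> 3 / \<delta>" using assms by (simp add: field_simps)
  finally have X: "real (card X) \<le> 3 / \<delta>" .
  define r where "r = (real n + 1) * (t / \<delta>)"
  have "1 \<le> r" unfolding r_def using assms mult_mono[of 1 "real n + 1" 1 "t / \<delta>"] by simp
  moreover have "E / \<delta> = Q * r" by (simp add: E_def r_def)
  moreover have "real (card W) \<le> E / \<delta> - - E / \<delta> + 2"
    unfolding W_def using card_floor_interval_le[of "- E / \<delta>" "E / \<delta>"] assms by (simp add: E_def)
  moreover have "2 * (Q + 1) * r = 2 * (Q * r) + 2 * r" by (simp add: algebra_simps)
  ultimately have W: "real (card W) \<le> 2 * (Q + 1) * r" by simp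
  have "card (attractor_centres a b g n \<delta> E) \<le> card (X \<times> Pow {..<n} \<times> X \<times> Pow {..<n} \<times> W)"
    unfolding attractor_centres_def X_def W_def by (intro card_image_le) simp
  also have "\<dots> = card X * card X * 4 ^ n * card W"
    by (simp add: card_cartesian_product card_Pow power_mult_distrib[symmetric])
  finally have "real (card (attractor_centres a b g n \<delta> E)) \<le> real (card X * card X * 4 ^ n * card W)"
    by (simp only: of_nat_le_iff)
  also have "\<dots> = real (card X) * real (card X) * 4 ^ n * real (card W)" by simp
  also have "\<dots> \<le> (3 / \<delta>) * (3 / \<delta>) * 4 ^ n * (2 * (Q + 1) * r)"
    using X W assms by (intro mult_mono) auto
  also have "\<dots> = 18 * (Q + 1) * (real n + 1) * (4 ^ n * t / \<delta> ^ 3)"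
    by (simp add: r_def power3_eq_cube field_simps)
  finally show ?thesis unfolding E_def .
qed

lemma attractor_fibre_diff_le:
  assumes ab: "0 < \<alpha>" "\<alpha> < \<beta>" "\<beta> < 1/2"
    and bounded: "\<And>p. p \<in> M_strip \<Longrightarrow> \<bar>g p\<bar> \<le> G"
    and lipschitz: "\<And>p q. p \<in> M_strip \<Longrightarrow> q \<in> M_strip \<Longrightarrow> \<bar>g p - g q\<bar> \<le> L * norm (p - q)"
    and "L \<ge> 0" and x: "0 \<le> x" "x < 1" "0 \<le> x'" "x' < 1" "\<bar>x - x'\<bar> \<le> \<delta>"
    and agree: "\<And>m. m < n \<Longrightarrow> d m = d' m" "\<And>m. m < n \<Longrightarrow> e m = e' m"
    and E: "\<beta> ^ n + real n * (L * (\<delta> + \<beta> ^ (n - 1))) + 2 * G * \<beta> ^ n / (1 - \<beta>) \<le> E"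
  shows "\<bar>(cantor_point \<beta> e + conj_shift \<alpha> \<beta> g (x, cantor_point \<alpha> d))
          - (cantor_point \<beta> e' + conj_shift \<alpha> \<beta> g (x', cantor_point \<alpha> d'))\<bar> \<le> E"
proof -
  have "\<bar>cantor_point \<beta> e - cantor_point \<beta> e'\<bar> \<le> \<beta> ^ n"
    using ab agree by (intro abs_cantor_point_diff) auto
  moreover have "\<bar>conj_shift \<alpha> \<beta> g (x, cantor_point \<alpha> d) - conj_shift \<alpha> \<beta> g (x', cantor_point \<alpha> d')\<bar>
      \<le> real n * (L * (\<bar>x - x'\<bar> + \<beta> ^ (n - 1))) + 2 * G * \<beta> ^ n / (1 - \<beta>)"
    using ab agree by (intro abs_conj_shift_diff[OF _ _ _ _ bounded lipschitz \<open>L \<ge> 0\<close> x(1-4)]) auto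
  moreover have "real n * (L * (\<bar>x - x'\<bar> + \<beta> ^ (n - 1))) \<le> real n * (L * (\<delta> + \<beta> ^ (n - 1)))"
    using x \<open>L \<ge> 0\<close> by (intro mult_left_mono add_right_mono) auto
  ultimately show ?thesis using E by (smt (verit))
qed

lemma attractor_subset_centres:
  assumes ab: "0 < \<alpha>" "\<alpha> < \<beta>" "\<beta> < 1/2"
    and bounded: "\<And>p. p \<in> M_strip \<Longrightarrow> \<bar>g p\<bar> \<le> G"
    and lipschitz: "\<And>p q. p \<in> M_strip \<Longrightarrow> q \<in> M_strip \<Longrightarrow> \<bar>g p - g q\<bar> \<le> L * norm (p - q)"
    and "L \<ge> 0" and \<delta>: "0 < \<delta>" "\<alpha> ^ n \<le> \<delta>"
    and E: "\<beta> ^ n + real n * (L * (\<delta> + \<beta> ^ (n - 1))) + 2 * G * \<beta> ^ n / (1 - \<beta>) \<le> E"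
  shows "attractor \<alpha> \<beta> g \<subseteq> (\<Union>c \<in> attractor_centres \<alpha> \<beta> g n \<delta> E. ball c (4 * \<delta>))"
proof
  fix p assume "p \<in> attractor \<alpha> \<beta> g"
  then obtain x d z e where x: "0 \<le> x" "x < 1" and z: "0 \<le> z" "z < 1"
    and p: "p = (x, cantor_point \<alpha> d, z, cantor_point \<beta> e + conj_shift \<alpha> \<beta> g (x, cantor_point \<alpha> d))"
    by (auto simp: attractor_def base_set_def cantor_eq_range conj_h_eq)
  define D where "D = {m. m < n \<and> d m}"
  define D' where "D' = {m. m < n \<and> e m}"
  define i where "i = \<lfloor>x / \<delta>\<rfloor>"
  define j where "j = \<lfloor>z / \<delta>\<rfloor>"
  have i: "i \<in> {0..\<lfloor>1 / \<delta>\<rfloor>}" "of_int i * \<delta> \<le> x" "\<bar>x - of_int i * \<delta>\<bar> < \<delta>"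
    using floor_grid[OF \<delta>(1), of 0 x 1] x unfolding i_def by auto
  have j: "j \<in> {0..\<lfloor>1 / \<delta>\<rfloor>}" "\<bar>z - of_int j * \<delta>\<bar> < \<delta>"
    using floor_grid[OF \<delta>(1), of 0 z 1] z unfolding j_def by auto
  let ?y = "cantor_point \<alpha> (\<lambda>m. m \<in> D)"
  let ?w = "cantor_point \<beta> (\<lambda>m. m \<in> D') + conj_shift \<alpha> \<beta> g (of_int i * \<delta>, ?y)"
  define v where "v = cantor_point \<beta> e + conj_shift \<alpha> \<beta> g (x, cantor_point \<alpha> d) - ?w"
  have "\<bar>cantor_point \<alpha> d - ?y\<bar> \<le> \<alpha> ^ n"
    using ab by (intro abs_cantor_point_diff) (auto simp: D_def)
  with \<delta>(2) have y: "\<bar>cantor_point \<alpha> d - ?y\<bar> \<le> \<delta>" by linarith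
  have "\<bar>v\<bar> \<le> E" unfolding v_def
    using i(1,2,3) x \<delta>(1)
    by (intro attractor_fibre_diff_le[OF ab bounded lipschitz \<open>L \<ge> 0\<close> _ _ _ _ _ _ _ E])
      (auto simp: D_def D'_def)
  then have k: "\<lfloor>v / \<delta>\<rfloor> \<in> {\<lfloor>- E / \<delta>\<rfloor>..\<lfloor>E / \<delta>\<rfloor>}" "\<bar>v - of_int \<lfloor>v / \<delta>\<rfloor> * \<delta>\<bar> < \<delta>"
    using floor_grid[OF \<delta>(1), of "- E" v E] by (auto simp: abs_le_iff)
  define c where "c = (of_int i * \<delta>, ?y, of_int j * \<delta>, ?w + of_int \<lfloor>v / \<delta>\<rfloor> * \<delta>)"
  have "(i, D, j, D', \<lfloor>v / \<delta>\<rfloor>) \<in> {0..\<lfloor>1 / \<delta>\<rfloor>} \<times> Pow {..<n} \<times> {0..\<lfloor>1 / \<delta>\<rfloor>} \<times> Pow {..<n}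
      \<times> {\<lfloor>- E / \<delta>\<rfloor>..\<lfloor>E / \<delta>\<rfloor>}"
    using i j k by (auto simp: D_def D'_def)
  then have "c \<in> attractor_centres \<alpha> \<beta> g n \<delta> E"
    unfolding attractor_centres_def c_def by (rule rev_image_eqI) simp
  moreover have "dist p c \<le> \<bar>x - of_int i * \<delta>\<bar> + \<bar>cantor_point \<alpha> d - ?y\<bar> + \<bar>z - of_int j * \<delta>\<bar>
      + \<bar>v - of_int \<lfloor>v / \<delta>\<rfloor> * \<delta>\<bar>"
    using dist_real4_le unfolding p c_def v_def by (simp add: diff_diff_eq)
  then have "dist p c < 4 * \<delta>" using i j k y by linarith
  ultimately show "p \<in> (\<Union>c \<in> attractor_centres \<alpha> \<beta> g n \<delta> E. ball c (4 * \<delta>))"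
    by (auto simp: dist_commute)
qed

lemma fibre_spread_le:
  fixes \<beta> \<delta> L G :: real
  assumes "0 < \<beta>" "\<beta> < 1" "L \<ge> 0" "G \<ge> 0" "\<delta> \<le> \<beta> ^ n"
  shows "\<beta> ^ n + real n * (L * (\<delta> + \<beta> ^ (n - 1))) + 2 * G * \<beta> ^ n / (1 - \<beta>)
           \<le> (real n + 1) * \<beta> ^ n * (1 + 2 * L / \<beta> + 2 * G / (1 - \<beta>))"
proof -
  define t where "t = \<beta> ^ n"
  have t: "0 \<le> t" "t \<le> t / \<beta>" using assms by (auto simp: t_def field_simps)
  have "\<beta> ^ (n - 1) \<le> t / \<beta>" using assms by (cases n) (auto simp: t_def)
  then have spread: "\<delta> + \<beta> ^ (n - 1) \<le> 2 * (t / \<beta>)" using assms t by (simp add: t_def)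
  have "L * (\<delta> + \<beta> ^ (n - 1)) \<le> 2 * L * (t / \<beta>)"
    using mult_left_mono[OF spread \<open>L \<ge> 0\<close>] by (simp add: mult_ac)
  then have "real n * (L * (\<delta> + \<beta> ^ (n - 1))) \<le> real n * (2 * L * (t / \<beta>))"
    by (rule mult_left_mono) simp
  also have "\<dots> \<le> (real n + 1) * (2 * L * (t / \<beta>))" using t assms by (intro mult_right_mono) auto
  finally have "real n * (L * (\<delta> + \<beta> ^ (n - 1))) \<le> (real n + 1) * (2 * L * (t / \<beta>))" .
  moreover have le_Suc_mult: "y \<le> (real n + 1) * y" if "0 \<le> y" for y :: real
    using mult_nonneg_nonneg[of "real n" y] that by (simp add: distrib_right)
  moreover have "0 \<le> 2 * G * t / (1 - \<beta>)" using t assms by simp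
  moreover have "(real n + 1) * t * (1 + 2 * L / \<beta> + 2 * G / (1 - \<beta>))
      = (real n + 1) * t + (real n + 1) * (2 * L * (t / \<beta>)) + (real n + 1) * (2 * G * t / (1 - \<beta>))"
    by (simp add: algebra_simps)
  ultimately show ?thesis
    unfolding t_def[symmetric] using le_Suc_mult[OF t(1)] le_Suc_mult[of "2 * G * t / (1 - \<beta>)"] by linarith
qed

lemma attractor_geometric_covers:
  assumes ab: "0 < \<alpha>" "\<alpha> < \<beta>" "\<beta> < 1/2" and "g \<in> Cb1"
  obtains K where "K \<ge> 1"
    and "\<And>n \<delta>. 0 < \<delta> \<Longrightarrow> \<alpha> ^ n \<le> \<delta> \<Longrightarrow> \<delta> \<le> \<beta> ^ n \<Longrightarrow>
           \<exists>F. finite F \<and> attractor \<alpha> \<beta> g \<subseteq> (\<Union>c\<in>F. ball c (4 * \<delta>))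
               \<and> real (card F) \<le> K * (real n + 1) * (4 ^ n * \<beta> ^ n / \<delta> ^ 3)"
proof -
  obtain G where bounded: "\<And>p. p \<in> M_strip \<Longrightarrow> \<bar>g p\<bar> \<le> G"
    using Cb1_bounded[OF \<open>g \<in> Cb1\<close>] by blast
  obtain L where "L \<ge> 0"
    and lipschitz: "\<And>p q. p \<in> M_strip \<Longrightarrow> q \<in> M_strip \<Longrightarrow> \<bar>g p - g q\<bar> \<le> L * norm (p - q)"
    using Cb1_lipschitz[OF \<open>g \<in> Cb1\<close>] by blast
  have "G \<ge> 0" using bounded[of "(0, 0)"] by (auto simp: M_strip_def)
  define Q where "Q = 1 + 2 * L / \<beta> + 2 * G / (1 - \<beta>)"
  have Q: "Q \<ge> 1" using ab \<open>L \<ge> 0\<close> \<open>G \<ge> 0\<close> by (simp add: Q_def)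
  show ?thesis
  proof (rule that[of "18 * (Q + 1)"])
    show "1 \<le> 18 * (Q + 1)" using Q by simp
    fix n \<delta> assume \<delta>: "0 < \<delta>" "\<alpha> ^ n \<le> \<delta>" "\<delta> \<le> \<beta> ^ n"
    define E where "E = (real n + 1) * \<beta> ^ n * Q"
    have "attractor \<alpha> \<beta> g \<subseteq> (\<Union>c \<in> attractor_centres \<alpha> \<beta> g n \<delta> E. ball c (4 * \<delta>))"
      using ab bounded lipschitz \<open>L \<ge> 0\<close> \<delta>(1,2)
    proof (rule attractor_subset_centres)
      show "\<beta> ^ n + real n * (L * (\<delta> + \<beta> ^ (n - 1))) + 2 * G * \<beta> ^ n / (1 - \<beta>) \<le> E"
        unfolding E_def Q_def using ab \<open>L \<ge> 0\<close> \<open>G \<ge> 0\<close> \<delta>(3) by (intro fibre_spread_le) auto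
    qed
    moreover have "real (card (attractor_centres \<alpha> \<beta> g n \<delta> E))
        \<le> 18 * (Q + 1) * (real n + 1) * (4 ^ n * \<beta> ^ n / \<delta> ^ 3)"
      unfolding E_def using ab Q \<delta> by (intro card_attractor_centres_le) (auto simp: power_le_one)
    ultimately show "\<exists>F. finite F \<and> attractor \<alpha> \<beta> g \<subseteq> (\<Union>c\<in>F. ball c (4 * \<delta>))
        \<and> real (card F) \<le> 18 * (Q + 1) * (real n + 1) * (4 ^ n * \<beta> ^ n / \<delta> ^ 3)"
      by (intro exI[of _ "attractor_centres \<alpha> \<beta> g n \<delta> E"]) (simp add: attractor_centres_def)
  qed
qed

lemma upper_box_dim_attractor_le:
  assumes ab: "0 < \<alpha>" "\<alpha> < \<beta>" "\<beta> < 1/2" and "g \<in> Cb1" and \<rho>: "\<alpha> \<le> \<rho>" "\<rho> \<le> \<beta>"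
  shows "upper_box_dim (attractor \<alpha> \<beta> g) \<le> ereal (ln (4 * \<beta> / \<rho> ^ 3) / - ln \<rho>)"
proof -
  obtain K where "K \<ge> 1" and covers: "\<And>n \<delta>. 0 < \<delta> \<Longrightarrow> \<alpha> ^ n \<le> \<delta> \<Longrightarrow> \<delta> \<le> \<beta> ^ n \<Longrightarrow>
      \<exists>F. finite F \<and> attractor \<alpha> \<beta> g \<subseteq> (\<Union>c\<in>F. ball c (4 * \<delta>))
          \<and> real (card F) \<le> K * (real n + 1) * (4 ^ n * \<beta> ^ n / \<delta> ^ 3)"
    using attractor_geometric_covers[OF ab \<open>g \<in> Cb1\<close>] by blast
  have \<rho>01: "0 < \<rho>" "\<rho> < 1" using ab \<rho> by auto
  show ?thesis
  proof (rule upper_box_dim_le_geometric_covers[OF \<rho>01 _ \<open>K \<ge> 1\<close>])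
    have "\<rho> ^ 3 \<le> \<rho>" using \<rho>01 by (simp add: power3_eq_cube mult_le_one)
    then have "\<rho> ^ 3 \<le> 4 * \<beta>" using \<rho>01 \<rho> by linarith
    then show "1 \<le> 4 * \<beta> / \<rho> ^ 3" using \<rho>01 by simp
    fix n
    have "\<alpha> ^ n \<le> \<rho> ^ n" "\<rho> ^ n \<le> \<beta> ^ n" using ab \<rho> by (auto intro: power_mono)
    moreover have "4 ^ n * \<beta> ^ n / (\<rho> ^ n) ^ 3 = (4 * \<beta> / \<rho> ^ 3) ^ n"
      by (simp add: power_divide power_mult_distrib flip: power_mult) (simp add: mult.commute)
    ultimately show "\<exists>F. finite F \<and> attractor \<alpha> \<beta> g \<subseteq> (\<Union>x\<in>F. ball x (4 * \<rho> ^ n))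
        \<and> real (card F) \<le> K * (real n + 1) * (4 * \<beta> / \<rho> ^ 3) ^ n"
      using covers[of "\<rho> ^ n" n] \<rho>01 by auto
  qed simp
qed

lemma cover_exponent_eq:
  fixes \<rho> b :: real
  assumes "0 < \<rho>" "\<rho> < 1" "0 < b"
  shows "ln (4 * b / \<rho> ^ 3) / - ln \<rho> = 3 - 2 * ln 2 / ln \<rho> - ln b / ln \<rho>"
proof -
  have "ln (4 * b / \<rho> ^ 3) = 2 * ln 2 + ln b - 3 * ln \<rho>"
    using assms by (simp add: ln_div ln_mult ln_realpow flip: ln_realpow[of 2 2, simplified])
  moreover have "ln \<rho> < 0" using assms by simp
  ultimately show ?thesis by (simp only:) (simp add: field_simps)
qed

theorem proposition3p10:
  fixes \<alpha> \<beta> :: real and g :: "real \<times> real \<Rightarrow> real"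
  assumes "0 < \<alpha>" "\<alpha> < \<beta>" "\<beta> < 1/2"
    and "g \<in> Cb1"
  shows "upper_box_dim (attractor \<alpha> \<beta> g) \<le> ereal (D_L \<alpha> \<beta>)"
proof -
  define \<rho> where "\<rho> = (if \<beta> \<le> 1/4 then \<beta> else \<alpha>)"
  have \<rho>: "\<alpha> \<le> \<rho>" "\<rho> \<le> \<beta>" using assms by (auto simp: \<rho>_def)
  then have "upper_box_dim (attractor \<alpha> \<beta> g) \<le> ereal (ln (4 * \<beta> / \<rho> ^ 3) / - ln \<rho>)"
    using upper_box_dim_attractor_le[OF assms] by blast
  also have "ln (4 * \<beta> / \<rho> ^ 3) / - ln \<rho> = D_L \<alpha> \<beta>"
    using cover_exponent_eq[of \<rho> \<beta>] assms \<rho> by (simp add: D_L_def \<rho>_def)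
  finally show ?thesis .
qed

end
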